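(* There is a universal constant $C_{\mathrm{hg}}>1$ such that the following holds. Let $m_1,k,s$ be positive integers and let $T_0,T_1,\dots,T_k$ be independent random subsets of $[m_1]$, where $T_0$ is uniformly distributed among subsets of size $s_0$, and for $j\in[k]$, $T_j$ is uniformly distributed among subsets of size $s_j$ with $1\le s_j\le s$. Let $\bar T_l=\bigcup_{i=0}^l T_i$, $X_l=|\bar T_{l-1}\cap T_l|$ for $l\in[k]$, and $S=\sum_{j=0}^k s_j$. Then for every $t>\max\{6Ss/m_1,1\}$, $$\mathbb{P}\Big\{\sum_{i=1}^kX_i\ge tk\Big\}\le C_{\mathrm{hg}}^k\exp\Big(-\log\Big(\frac{t}{6Ss/m_1}\Big)tk\Big).$$
   Context: $[m]=\{1,\dots,m\}$. *)

theory Defs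
  imports "HOL-Probability.Probability"
begin

definition unif_subset :: "nat \<Rightarrow> nat \<Rightarrow> nat set pmf" where
  "unif_subset m r = pmf_of_set {A. A \<subseteq> {1..m} \<and> card A = r}"

definition indep_unif_subsets :: "nat \<Rightarrow> nat \<Rightarrow> (nat \<Rightarrow> nat) \<Rightarrow> (nat \<Rightarrow> nat set) pmf" where
  "indep_unif_subsets m k sz = Pi_pmf {0..k} {} (\<lambda>j. unif_subset m (sz j))"

definition overlap :: "(nat \<Rightarrow> nat set) \<Rightarrow> nat \<Rightarrow> nat" where
  "overlap T l = card ((\<Union>i<l. T i) \<inter> T l)"

end

theory Submission
  imports Defs
begin

text \<open>
  The union \<open>U = T_0 \<union> \<dots> \<union> T_(l-1)\<close> has at most \<open>S\<close> elements, so for fixed \<open>U\<close> a union bound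
  over the \<open>x\<close>-subsets of \<open>U\<close> gives
  \<open>P(|U \<inter> T_l| \<ge> x) \<le> (|U| choose x) (s/m)^x \<le> a^x / x!\<close> with \<open>a = S s / m\<close>.
  Poisson-type tails \<open>b^x / x!\<close> are stable under adding a variable whose conditional tail is
  \<open>a^x / x!\<close>, because the convolution of the two sequences is \<open>(a + b)^n / n!\<close>.
  Conditioning on \<open>T_0, \<dots>, T_(l-1)\<close> and inducting on \<open>k\<close> therefore gives
  \<open>P(\<Sum> X_i \<ge> n) \<le> (k a)^n / n!\<close>. With \<open>n = \<lceil>t k\<rceil>\<close> and \<open>n! \<ge> (n/e)^n\<close> this is at most
  \<open>(e a / t)^(t k) \<le> (6 a / t)^(t k)\<close>, so already \<open>C = 2\<close> works.
\<close>

lemma card_supsets_of_card: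
  assumes "B \<subseteq> {1..m}" "card B = x" "x \<le> r"
  shows "card {A. A \<subseteq> {1..m} \<and> card A = r \<and> B \<subseteq> A} = (m - x) choose (r - x)"
proof -
  have finB: "finite B" using assms(1) finite_subset by blast
  have eq: "{A. A \<subseteq> {1..m} \<and> card A = r \<and> B \<subseteq> A}
      = (\<lambda>C. C \<union> B) ` {C. C \<subseteq> {1..m} - B \<and> card C = r - x}"
  proof (rule set_eqI, rule iffI)
    fix A assume "A \<in> {A. A \<subseteq> {1..m} \<and> card A = r \<and> B \<subseteq> A}"
    hence A: "A \<subseteq> {1..m}" "card A = r" "B \<subseteq> A" by auto
    have "card (A - B) = r - x" using A assms finB by (simp add: card_Diff_subset)
    moreover have "A = (A - B) \<union> B" using A by blast
    ultimately show "A \<in> (\<lambda>C. C \<union> B) ` {C. C \<subseteq> {1..m} - B \<and> card C = r - x}"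
      using A by blast
  next
    fix A assume "A \<in> (\<lambda>C. C \<union> B) ` {C. C \<subseteq> {1..m} - B \<and> card C = r - x}"
    then obtain C where C: "C \<subseteq> {1..m} - B" "card C = r - x" "A = C \<union> B" by blast
    have "finite C" using C(1) finite_subset by blast
    then have "card (C \<union> B) = card C + card B" using C(1) finB by (intro card_Un_disjoint) auto
    thus "A \<in> {A. A \<subseteq> {1..m} \<and> card A = r \<and> B \<subseteq> A}" using C assms by auto
  qed
  have inj: "inj_on (\<lambda>C. C \<union> B) {C. C \<subseteq> {1..m} - B \<and> card C = r - x}"
    by (rule inj_onI) blast
  have "card ({1..m} - B) = m - x" using assms finB by (simp add: card_Diff_subset)
  thus ?thesis unfolding eq using card_image[OF inj] n_subsets[of "{1..m} - B" "r - x"] by simp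
qed

lemma binomial_diff_le_ratio_power:
  "x \<le> r \<Longrightarrow> r \<le> m \<Longrightarrow>
    real ((m - x) choose (r - x)) \<le> (real r / real m) ^ x * real (m choose r)"
proof (induction x arbitrary: m r)
  case 0
  then show ?case by simp
next
  case (Suc x)
  have r1: "r \<ge> 1" "m \<ge> 1" using Suc.prems by auto
  have IH: "real ((m - 1 - x) choose (r - 1 - x))
      \<le> (real (r - 1) / real (m - 1)) ^ x * real ((m - 1) choose (r - 1))"
    using Suc.IH[of "r - 1" "m - 1"] Suc.prems by simp
  have ratio: "real (r - 1) / real (m - 1) \<le> real r / real m"
    using Suc.prems r1 by (cases "m = 1") (auto simp: of_nat_diff divide_simps algebra_simps)
  have absorb: "real ((m - 1) choose (r - 1)) = real r / real m * real (m choose r)"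
  proof -
    have "r * (m choose r) = m * ((m - 1) choose (r - 1))"
      using times_binomial_minus1_eq[of r m] r1 by simp
    then have "real r * real (m choose r) = real m * real ((m - 1) choose (r - 1))"
      by (metis of_nat_mult)
    then show ?thesis using r1 by (simp add: field_simps)
  qed
  have "real ((m - Suc x) choose (r - Suc x))
      \<le> (real (r - 1) / real (m - 1)) ^ x * real ((m - 1) choose (r - 1))"
    using IH by simp
  also have "\<dots> \<le> (real r / real m) ^ x * real ((m - 1) choose (r - 1))"
    by (intro mult_right_mono power_mono ratio) auto
  also have "\<dots> = (real r / real m) ^ Suc x * real (m choose r)"
    unfolding absorb by (simp only: power_Suc mult_ac)
  finally show ?case .
qed

lemma set_pmf_unif_subset:
  assumes "r \<le> m"
  shows "set_pmf (unif_subset m r) = {A. A \<subseteq> {1..m} \<and> card A = r}"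
proof -
  have "finite {A. A \<subseteq> {1..m} \<and> card A = r}"
    by (rule finite_subset[of _ "Pow {1..m}"]) auto
  moreover have "card {A. A \<subseteq> {1..m} \<and> card A = r} = m choose r"
    using n_subsets[of "{1..m}" r] by simp
  then have "{A. A \<subseteq> {1..m} \<and> card A = r} \<noteq> {}"
    using assms by (metis card.empty zero_less_binomial_iff neq0_conv)
  ultimately show ?thesis unfolding unif_subset_def by simp
qed

lemma prob_unif_subset_supset:
  assumes "finite B" "r \<le> m" "m \<ge> 1"
  shows "measure_pmf.prob (unif_subset m r) {A. B \<subseteq> A} \<le> (real r / real m) ^ card B"
proof -
  let ?S = "{A. A \<subseteq> {1..m} \<and> card A = r}"
  have fin: "finite ?S" by (rule finite_subset[of _ "Pow {1..m}"]) auto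
  have card_S: "card ?S = m choose r" using n_subsets[of "{1..m}" r] by simp
  have "?S \<noteq> {}" using set_pmf_unif_subset[OF assms(2)] set_pmf_not_empty by metis
  then have prob: "measure_pmf.prob (unif_subset m r) {A. B \<subseteq> A}
      = card {A. A \<subseteq> {1..m} \<and> card A = r \<and> B \<subseteq> A} / card ?S"
    unfolding unif_subset_def using fin by (simp add: measure_pmf_of_set Int_def conj_assoc)
  show ?thesis
  proof (cases "B \<subseteq> {1..m} \<and> card B \<le> r")
    case True
    have "real (card {A. A \<subseteq> {1..m} \<and> card A = r \<and> B \<subseteq> A})
        \<le> (real r / real m) ^ card B * real (m choose r)"
      using card_supsets_of_card[of B m "card B" r] binomial_diff_le_ratio_power[of "card B" r m]
        True assms by simp
    moreover have "real (m choose r) > 0" using assms by simp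
    ultimately show ?thesis unfolding prob card_S by (simp add: pos_divide_le_eq)
  next
    case False
    have "card B \<le> card A" if "B \<subseteq> A" "A \<subseteq> {1..m}" for A
      using that by (intro card_mono) (auto intro: finite_subset)
    then have "{A. A \<subseteq> {1..m} \<and> card A = r \<and> B \<subseteq> A} = {}" using False by force
    then show ?thesis unfolding prob by (simp only: card.empty) simp
  qed
qed

lemma prob_unif_subset_card_Int_ge:
  assumes "finite U" "r \<le> m" "m \<ge> 1"
  shows "measure_pmf.prob (unif_subset m r) {A. x \<le> card (U \<inter> A)}
    \<le> (real (card U) * real r / real m) ^ x / fact x"
proof -
  let ?I = "{B. B \<subseteq> U \<and> card B = x}"
  have finI: "finite ?I" by (rule finite_subset[of _ "Pow U"]) (use assms in auto)
  have "{A. x \<le> card (U \<inter> A)} \<subseteq> (\<Union>B\<in>?I. {A. B \<subseteq> A})"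
  proof
    fix A assume "A \<in> {A. x \<le> card (U \<inter> A)}"
    then obtain B where "B \<subseteq> U \<inter> A" "card B = x" by (auto elim: obtain_subset_with_card_n)
    then show "A \<in> (\<Union>B\<in>?I. {A. B \<subseteq> A})" by blast
  qed
  then have "measure_pmf.prob (unif_subset m r) {A. x \<le> card (U \<inter> A)}
      \<le> measure_pmf.prob (unif_subset m r) (\<Union>B\<in>?I. {A. B \<subseteq> A})"
    by (rule measure_pmf.finite_measure_mono) simp
  also have "\<dots> \<le> (\<Sum>B\<in>?I. measure_pmf.prob (unif_subset m r) {A. B \<subseteq> A})"
    by (rule measure_pmf.finite_measure_subadditive_finite[OF finI]) simp
  also have "\<dots> \<le> (\<Sum>B\<in>?I. (real r / real m) ^ x)"
  proof (rule sum_mono)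
    fix B assume "B \<in> ?I"
    then show "measure_pmf.prob (unif_subset m r) {A. B \<subseteq> A} \<le> (real r / real m) ^ x"
      using prob_unif_subset_supset[of B r m] assms finite_subset by auto
  qed
  also have "\<dots> = real (card U choose x) * (real r / real m) ^ x"
    using n_subsets[OF assms(1), of x] by simp
  also have "\<dots> \<le> real (card U) ^ x / fact x * (real r / real m) ^ x"
  proof (rule mult_right_mono)
    have "real (card U choose x) * fact x \<le> real (card U) ^ x"
      using binomial_fact_pow[of "card U" x] by (metis of_nat_fact of_nat_le_iff of_nat_mult of_nat_power)
    then show "real (card U choose x) \<le> real (card U) ^ x / fact x" by (simp add: field_simps)
  qed simp
  also have "\<dots> = (real (card U) * real r / real m) ^ x / fact x"
    by (simp add: power_mult_distrib power_divide)
  finally show ?thesis .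
qed

lemma set_pmf_indep_unif_subsets:
  assumes "T \<in> set_pmf (indep_unif_subsets m k sz)" "i \<le> k" "sz i \<le> m"
  shows "T i \<subseteq> {1..m}" "card (T i) = sz i"
proof -
  have "T \<in> PiE_dflt {0..k} {} (set_pmf \<circ> (\<lambda>j. unif_subset m (sz j)))"
    using assms(1) unfolding indep_unif_subsets_def by (simp add: set_Pi_pmf)
  then have "T i \<in> set_pmf (unif_subset m (sz i))" using assms(2) by (auto simp: PiE_dflt_def)
  then show "T i \<subseteq> {1..m}" "card (T i) = sz i" using set_pmf_unif_subset[OF assms(3)] by auto
qed

lemma indep_unif_subsets_Suc:
  "indep_unif_subsets m (Suc k) sz = bind_pmf (indep_unif_subsets m k sz)
     (\<lambda>T. map_pmf (\<lambda>A. T(Suc k := A)) (unif_subset m (sz (Suc k))))"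
proof -
  have "{0..Suc k} = insert (Suc k) {0..k}" by auto
  then show ?thesis
    unfolding indep_unif_subsets_def
    by (simp only:) (subst Pi_pmf_insert', auto simp: map_pmf_def intro: bind_commute_pmf)
qed

lemma measure_pmf_prob_bind_pmf:
  "measure_pmf.prob (bind_pmf M N) E = measure_pmf.expectation M (\<lambda>x. measure_pmf.prob (N x) E)"
  unfolding measure_pmf_bind
  by (rule measure_pmf.measure_bind[where N="count_space UNIV"])
    (auto simp: measurable_measure_pmf intro: measurable_space[OF measurable_measure_pmf[of N], simplified])

lemma sum_overlap_fun_upd_Suc:
  "(\<Sum>i=1..Suc k. overlap (T(Suc k := A)) i) = (\<Sum>i=1..k. overlap T i) + card ((\<Union>i\<le>k. T i) \<inter> A)"
proof -
  have "overlap (T(Suc k := A)) i = overlap T i" if "i \<in> {1..k}" for i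
  proof -
    have "(\<Union>j<i. (T(Suc k := A)) j) = (\<Union>j<i. T j)" "(T(Suc k := A)) i = T i" using that by auto
    then show ?thesis unfolding overlap_def by simp
  qed
  moreover have "(\<Union>j<Suc k. (T(Suc k := A)) j) = (\<Union>i\<le>k. T i)" by (auto simp: less_Suc_eq_le)
  ultimately show ?thesis unfolding overlap_def by simp
qed

lemma sum_power_div_fact_convolution:
  fixes a b :: real
  shows "(\<Sum>x\<le>n. a ^ x / fact x * (b ^ (n - x) / fact (n - x))) = (a + b) ^ n / fact n"
proof -
  have "(a + b) ^ n / fact n = (\<Sum>x\<le>n. real (n choose x) * a ^ x * b ^ (n - x) / fact n)"
    by (simp add: binomial_ring sum_divide_distrib)
  also have "\<dots> = (\<Sum>x\<le>n. a ^ x / fact x * (b ^ (n - x) / fact (n - x)))"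
    by (intro sum.cong refl) (simp add: binomial_fact field_simps)
  finally show ?thesis by simp
qed

lemma prob_shifted_tail_le:
  fixes Z :: "'a \<Rightarrow> nat"
  assumes "a \<ge> 0" and tail: "\<And>x. measure_pmf.prob N {y. x \<le> Z y} \<le> a ^ x / fact x"
  shows "measure_pmf.prob N {y. n \<le> c + Z y} \<le> (\<Sum>x\<le>n. if n - x \<le> c then a ^ x / fact x else 0)"
proof -
  have le_term: "(if n - x \<le> c then a ^ x / fact x else 0)
      \<le> (\<Sum>x\<le>n. if n - x \<le> c then a ^ x / fact x else 0)" if "x \<le> n" for x
    by (rule member_le_sum) (use that assms(1) in auto)
  show ?thesis
  proof (cases "n \<le> c")
    case True
    have "measure_pmf.prob N {y. n \<le> c + Z y} \<le> (if n - 0 \<le> c then a ^ 0 / fact 0 else 0)"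
      using True by simp
    also have "\<dots> \<le> (\<Sum>x\<le>n. if n - x \<le> c then a ^ x / fact x else 0)" by (rule le_term) simp
    finally show ?thesis .
  next
    case False
    have "measure_pmf.prob N {y. n \<le> c + Z y} \<le> measure_pmf.prob N {y. n - c \<le> Z y}"
      by (rule measure_pmf.finite_measure_mono) auto
    also have "\<dots> \<le> (if n - (n - c) \<le> c then a ^ (n - c) / fact (n - c) else 0)"
      using tail False by simp
    also have "\<dots> \<le> (\<Sum>x\<le>n. if n - x \<le> c then a ^ x / fact x else 0)" by (rule le_term) simp
    finally show ?thesis .
  qed
qed

lemma expectation_prob_add_tail_le:
  fixes Y :: "'a \<Rightarrow> nat" and Z :: "'a \<Rightarrow> 'b \<Rightarrow> nat"
  assumes "a \<ge> 0" "b \<ge> 0"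
    and tail_Y: "\<And>x. measure_pmf.prob M {T. x \<le> Y T} \<le> b ^ x / fact x"
    and tail_Z: "\<And>T x. T \<in> set_pmf M \<Longrightarrow> measure_pmf.prob (N T) {y. x \<le> Z T y} \<le> a ^ x / fact x"
  shows "measure_pmf.expectation M (\<lambda>T. measure_pmf.prob (N T) {y. n \<le> Y T + Z T y})
    \<le> (a + b) ^ n / fact n"
proof -
  let ?g = "\<lambda>x T. a ^ x / fact x * indicator {T. n - x \<le> Y T} T"
  have integrable_g: "integrable M (?g x)" for x
    by (rule measure_pmf.integrable_const_bound[where B="a ^ x / fact x"])
      (use assms(1) in \<open>auto simp: indicator_def\<close>)
  have "measure_pmf.expectation M (\<lambda>T. measure_pmf.prob (N T) {y. n \<le> Y T + Z T y})
      \<le> measure_pmf.expectation M (\<lambda>T. \<Sum>x\<le>n. ?g x T)"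
  proof (rule integral_mono_AE)
    show "integrable M (\<lambda>T. measure_pmf.prob (N T) {y. n \<le> Y T + Z T y})"
      by (rule measure_pmf.integrable_const_bound[where B=1]) auto
    show "integrable M (\<lambda>T. \<Sum>x\<le>n. ?g x T)" using integrable_g by simp
    have "measure_pmf.prob (N T) {y. n \<le> Y T + Z T y} \<le> (\<Sum>x\<le>n. ?g x T)" if "T \<in> set_pmf M" for T
    proof -
      have "(\<Sum>x\<le>n. ?g x T) = (\<Sum>x\<le>n. if n - x \<le> Y T then a ^ x / fact x else 0)"
        by (intro sum.cong) (auto simp: indicator_def)
      then show ?thesis using prob_shifted_tail_le[OF assms(1) tail_Z[OF that], of n "Y T"] by simp
    qed
    then show "AE T in M. measure_pmf.prob (N T) {y. n \<le> Y T + Z T y} \<le> (\<Sum>x\<le>n. ?g x T)"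
      by (simp add: AE_measure_pmf_iff)
  qed
  also have "\<dots> = (\<Sum>x\<le>n. a ^ x / fact x * measure_pmf.prob M {T. n - x \<le> Y T})"
    using integrable_g by simp
  also have "\<dots> \<le> (\<Sum>x\<le>n. a ^ x / fact x * (b ^ (n - x) / fact (n - x)))"
    by (intro sum_mono mult_left_mono tail_Y) (use assms(1) in auto)
  also have "\<dots> = (a + b) ^ n / fact n" by (rule sum_power_div_fact_convolution)
  finally show ?thesis .
qed

lemma prob_sum_overlap_ge:
  assumes "m \<ge> 1" "a \<ge> 0"
  shows "sz 0 \<le> m \<Longrightarrow> \<forall>j\<in>{1..k}. sz j \<le> s \<and> sz j \<le> m \<Longrightarrow>
    real (\<Sum>j=0..k. sz j) * real s \<le> a * real m \<Longrightarrow>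
    measure_pmf.prob (indep_unif_subsets m k sz) {T. n \<le> (\<Sum>i=1..k. overlap T i)}
      \<le> (real k * a) ^ n / fact n"
proof (induction k arbitrary: n)
  case 0
  then show ?case by simp
next
  case (Suc k)
  let ?M = "indep_unif_subsets m k sz"
  let ?U = "unif_subset m (sz (Suc k))"
  define Y where "Y T = (\<Sum>i=1..k. overlap T i)" for T
  define W where "W T = (\<Union>i\<le>k. T i)" for T :: "nat \<Rightarrow> nat set"
  have "real (\<Sum>j=0..k. sz j) * real s \<le> real (\<Sum>j=0..Suc k. sz j) * real s"
    by (intro mult_right_mono) simp_all
  then have size_bound: "real (\<Sum>j=0..k. sz j) * real s \<le> a * real m"
    using Suc.prems(3) by linarith
  have sz_Suc: "sz (Suc k) \<le> s" "sz (Suc k) \<le> m" using Suc.prems(2) by auto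
  have tail_Y: "measure_pmf.prob ?M {T. x \<le> Y T} \<le> (real k * a) ^ x / fact x" for x
    unfolding Y_def using Suc.IH[of x] Suc.prems size_bound by auto
  have tail_Z: "measure_pmf.prob ?U {A. x \<le> card (W T \<inter> A)} \<le> a ^ x / fact x"
    if T: "T \<in> set_pmf ?M" for T x
  proof -
    have T_i: "T i \<subseteq> {1..m}" "card (T i) = sz i" if "i \<le> k" for i
      using set_pmf_indep_unif_subsets[OF T that] that Suc.prems(1,2) by (cases i; auto)+
    have finite_W: "finite (W T)" unfolding W_def using T_i by (auto intro: finite_subset)
    have "card (W T) \<le> (\<Sum>i\<le>k. card (T i))" unfolding W_def by (rule card_UN_le) simp
    also have "\<dots> = (\<Sum>j=0..k. sz j)" using T_i by (simp add: atMost_atLeast0)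
    finally have card_W: "card (W T) \<le> (\<Sum>j=0..k. sz j)" .
    have "real (card (W T)) * real (sz (Suc k)) \<le> real (\<Sum>j=0..k. sz j) * real s"
      using card_W sz_Suc by (intro mult_mono) (simp_all only: of_nat_le_iff of_nat_0_le_iff)
    then have ratio: "real (card (W T)) * real (sz (Suc k)) / real m \<le> a"
      using size_bound assms(1) by (simp add: divide_simps)
    have "measure_pmf.prob ?U {A. x \<le> card (W T \<inter> A)}
        \<le> (real (card (W T)) * real (sz (Suc k)) / real m) ^ x / fact x"
      by (rule prob_unif_subset_card_Int_ge[OF finite_W sz_Suc(2) assms(1)])
    also have "\<dots> \<le> a ^ x / fact x"
      by (intro divide_right_mono power_mono ratio) auto
    finally show ?thesis .
  qed
  have "measure_pmf.prob (indep_unif_subsets m (Suc k) sz) {T. n \<le> (\<Sum>i=1..Suc k. overlap T i)}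
      = measure_pmf.expectation ?M (\<lambda>T. measure_pmf.prob ?U {A. n \<le> Y T + card (W T \<inter> A)})"
    unfolding indep_unif_subsets_Suc measure_pmf_prob_bind_pmf
    by (simp only: measure_map_pmf vimage_def mem_Collect_eq sum_overlap_fun_upd_Suc Y_def W_def)
  also have "\<dots> \<le> (a + real k * a) ^ n / fact n"
    by (rule expectation_prob_add_tail_le[OF assms(2) _ tail_Y tail_Z]) (use assms(2) in auto)
  also have "\<dots> = (real (Suc k) * a) ^ n / fact n" by (simp add: algebra_simps)
  finally show ?case .
qed

lemma power_div_fact_le_exp:
  fixes x :: real
  assumes "x \<ge> 0"
  shows "x ^ n / fact n \<le> exp x"
proof -
  have "(\<lambda>j. x ^ j / fact j) sums exp x"
    using exp_converges[of x] by (simp add: divide_inverse mult.commute)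
  then show ?thesis
    using sum_le_suminf[of "\<lambda>j. x ^ j / fact j" "{n}"] assms by (auto simp: sums_iff)
qed

lemma power_div_fact_le_exp_neg_ln:
  fixes a t :: real and k n :: nat
  assumes a: "a > 0" and t: "t > 6 * a" and k: "k \<ge> 1" and n: "real n \<ge> t * real k"
  shows "(real k * a) ^ n / fact n \<le> exp (- ln (t / (6 * a)) * t * real k)"
proof -
  have t0: "t > 0" using a t by linarith
  have "t * real k > 0" using t0 k by simp
  then have n0: "real n > 0" using n by linarith
  have "exp 1 * a \<le> 3 * a" using exp_le a by (intro mult_right_mono) auto
  then have e_le: "exp 1 * a / t \<le> 1" using t t0 by simp
  have "(real k * a) ^ n / fact n = (real k * a) ^ n / real n ^ n * (real n ^ n / fact n)"
    using n0 by (simp add: field_simps)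
  also have "\<dots> \<le> (real k * a) ^ n / real n ^ n * exp (real n)"
    by (intro mult_left_mono power_div_fact_le_exp) (use a in auto)
  also have "\<dots> = (exp 1 * real k * a / real n) ^ n"
    by (simp add: power_divide power_mult_distrib exp_of_nat_mult[symmetric] field_simps)
  also have "\<dots> \<le> (exp 1 * a / t) ^ n"
  proof (rule power_mono)
    have "real k / real n \<le> 1 / t" using n t0 n0 by (simp add: divide_simps mult.commute)
    then show "exp 1 * real k * a / real n \<le> exp 1 * a / t"
      using mult_left_mono[of "real k / real n" "1 / t" "exp 1 * a"] a by (simp add: field_simps)
  qed (use a n0 in auto)
  also have "\<dots> = (exp 1 * a / t) powr real n" using a t0 by (simp add: powr_realpow)
  also have "\<dots> \<le> (exp 1 * a / t) powr (t * real k)"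
    by (rule powr_mono'[OF n _ e_le]) (use a t0 in auto)
  also have "\<dots> = (exp 1 / 6) powr (t * real k) * (6 * a / t) powr (t * real k)"
    by (subst powr_mult[symmetric]) (use a t0 in auto)
  also have "\<dots> \<le> (6 * a / t) powr (t * real k)"
    using powr_le1[of "t * real k" "exp 1 / 6"] exp_le t0 a
    by (intro mult_left_le_one_le) auto
  also have "\<dots> = exp (- ln (t / (6 * a)) * t * real k)"
  proof -
    have "ln (6 * a / t) = - ln (t / (6 * a))" using a t0 by (simp add: ln_div)
    then show ?thesis using a t0 by (simp add: powr_def mult_ac)
  qed
  finally show ?thesis .
qed

theorem proposition4p8:
  "\<exists>C::real. C > 1 \<and>
    (\<forall>(m1::nat) (k::nat) (s::nat) (sz::nat \<Rightarrow> nat) (t::real).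
       m1 \<ge> 1 \<longrightarrow> k \<ge> 1 \<longrightarrow> s \<ge> 1 \<longrightarrow>
       sz 0 \<le> m1 \<longrightarrow>
       (\<forall>j\<in>{1..k}. 1 \<le> sz j \<and> sz j \<le> s \<and> sz j \<le> m1) \<longrightarrow>
       (let S = real (\<Sum>j=0..k. sz j) in
        t > max (6 * S * real s / real m1) 1 \<longrightarrow>
        measure_pmf.prob (indep_unif_subsets m1 k sz)
          {T. real (\<Sum>i=1..k. overlap T i) \<ge> t * real k}
        \<le> C ^ k * exp (- ln (t / (6 * S * real s / real m1)) * t * real k)))"
proof (rule exI[of _ 2], intro conjI allI impI)
  fix m1 k s :: nat and sz :: "nat \<Rightarrow> nat" and t :: real
  assume m1: "m1 \<ge> 1" and k: "k \<ge> 1" and s: "s \<ge> 1" and sz0: "sz 0 \<le> m1"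
    and sz: "\<forall>j\<in>{1..k}. 1 \<le> sz j \<and> sz j \<le> s \<and> sz j \<le> m1"
  define a where "a = real (\<Sum>j=0..k. sz j) * real s / real m1"
  have "sz 1 \<le> (\<Sum>j=0..k. sz j)" using k by (intro member_le_sum) auto
  moreover have "1 \<le> sz 1" using sz k by auto
  ultimately have "(\<Sum>j=0..k. sz j) \<ge> 1" by linarith
  then have a: "a > 0" unfolding a_def using s m1 by (simp del: of_nat_sum)
  define n where "n = nat \<lceil>t * real k\<rceil>"
  have event: "{T. real (\<Sum>i=1..k. overlap T i) \<ge> t * real k} = {T. n \<le> (\<Sum>i=1..k. overlap T i)}"
    unfolding n_def by (simp add: nat_le_iff ceiling_le_iff)
  have tail: "measure_pmf.prob (indep_unif_subsets m1 k sz) {T. n \<le> (\<Sum>i=1..k. overlap T i)}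
      \<le> (real k * a) ^ n / fact n"
    by (rule prob_sum_overlap_ge) (use m1 a sz0 sz in \<open>auto simp: a_def\<close>)
  have six_a: "6 * real (\<Sum>j=0..k. sz j) * real s / real m1 = 6 * a" unfolding a_def by simp
  show "let S = real (\<Sum>j=0..k. sz j) in t > max (6 * S * real s / real m1) 1 \<longrightarrow>
      measure_pmf.prob (indep_unif_subsets m1 k sz) {T. real (\<Sum>i=1..k. overlap T i) \<ge> t * real k}
      \<le> 2 ^ k * exp (- ln (t / (6 * S * real s / real m1)) * t * real k)"
    unfolding Let_def six_a
  proof
    assume "t > max (6 * a) 1"
    moreover have "real n \<ge> t * real k" unfolding n_def by linarith
    ultimately have "(real k * a) ^ n / fact n \<le> exp (- ln (t / (6 * a)) * t * real k)"
      using power_div_fact_le_exp_neg_ln[OF a _ k] by simp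
    also have "\<dots> \<le> 2 ^ k * exp (- ln (t / (6 * a)) * t * real k)" by simp
    finally show "measure_pmf.prob (indep_unif_subsets m1 k sz) {T. real (\<Sum>i=1..k. overlap T i) \<ge> t * real k}
        \<le> 2 ^ k * exp (- ln (t / (6 * a)) * t * real k)"
      using tail unfolding event by linarith
  qed
qed simp

end
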